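(* Assume (A2) and (A4), and let $\beta_1\ge\beta_0\ge0$. Write $\Delta=\sqrt{n(\beta_1-\beta_0)(F_n'(\beta_1)-F_n'(\beta_0))}$. Then almost surely: (a) for every measurable $f:\Sigma_n\to[-1,1]$, $|\langle f(\sigma)\rangle_{\beta_1}-\langle f(\sigma)\rangle_{\beta_0}|\le\Delta$; (b) for every $\sigma\in\Sigma_n$, $\frac1n\big|\sum_i\varphi_{i,n}(\sigma)\langle\varphi_{i,n}\rangle_{\beta_1}-\sum_i\varphi_{i,n}(\sigma)\langle\varphi_{i,n}\rangle_{\beta_0}\big|\le\Delta$; (c) $\frac1n\big|\sum_i\langle\varphi_{i,n}\rangle_{\beta_1}^2-\sum_i\langle\varphi_{i,n}\rangle_{\beta_0}^2\big|\le2\Delta$.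
   Context: Setting: $(\Sigma_n,P_n)$ is a Polish space with a Borel probability measure; $H_n$ is a centered Gaussian field on $\Sigma_n$; $Z_n(\beta)=\int e^{\beta H_n}dP_n$, $F_n(\beta)=\frac1n\log Z_n(\beta)$, and $\langle\cdot\rangle_\beta$ is expectation under $\mu_n^\beta(d\sigma)=e^{\beta H_n(\sigma)}P_n(d\sigma)/Z_n(\beta)$. (A2): $\operatorname{Var}H_n(\sigma)=n$ for all $\sigma$. (A4): there are measurable $\varphi_{i,n}:\Sigma_n\to\mathbb R$ and i.i.d. standard normal $g_{i,n}$ ($i\ge1$) with $H_n(\sigma)=\sum_{i\ge1}g_{i,n}\varphi_{i,n}(\sigma)$ a.s. for each $\sigma$, the series converging in $L^2(\mathbb P)$. *)

theory Defs
  imports "HOL-Probability.Probability"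
begin

text \<open>Partition function Z_n(beta) = integral of exp(beta H) over P, for a fixed
  realisation h : Sigma -> real of the Hamiltonian.\<close>
definition partition_fn :: "'s measure \<Rightarrow> ('s \<Rightarrow> real) \<Rightarrow> real \<Rightarrow> real" where
  "partition_fn P h \<beta> = (\<integral>\<sigma>. exp (\<beta> * h \<sigma>) \<partial>P)"

definition free_energy :: "nat \<Rightarrow> 's measure \<Rightarrow> ('s \<Rightarrow> real) \<Rightarrow> real \<Rightarrow> real" where
  "free_energy n P h \<beta> = ln (partition_fn P h \<beta>) / real n"

definition gibbs_avg :: "'s measure \<Rightarrow> ('s \<Rightarrow> real) \<Rightarrow> real \<Rightarrow> ('s \<Rightarrow> real) \<Rightarrow> real" where
  "gibbs_avg P h \<beta> f = (\<integral>\<sigma>. f \<sigma> * exp (\<beta> * h \<sigma>) \<partial>P) / partition_fn P h \<beta>"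

end

theory Submission
  imports Defs
begin

(*
  Write rho_b = exp (b H) / Z_n(b) for the density of the Gibbs measure at inverse temperature b.
  Since F_n'(b) = <H>_b / n, the square of Delta is
    (b1 - b0) (<H>_b1 - <H>_b0) = integral of (rho_b1 - rho_b0) (ln rho_b1 - ln rho_b0) dP,
  the symmetrised relative entropy of the two Gibbs measures. As the logarithmic mean is at most
  the arithmetic mean, (rho_b1 - rho_b0)^2 <= (rho_b1 - rho_b0) (ln rho_b1 - ln rho_b0)
  (rho_b1 + rho_b0) / 2, so Cauchy-Schwarz bounds the L1(P) distance of the densities by Delta,
  which gives (a).
  By (A2) and (A4), Bessel's inequality gives sum_i phi_i(sigma)^2 <= n, so by Cauchy-Schwarz
  |sum_i c_i phi_i| <= n whenever sum_i c_i^2 <= n. This applies to c_i = phi_i(sigma) and, by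
  Jensen's inequality, to c_i = <phi_i>_b; with the L1 bound it gives (b) and (c).
  All of this is deterministic once Z_n(b) is finite for every b, which holds almost surely:
  Fatou's lemma along an almost surely convergent subsequence of the Gaussian partial sums gives
  E exp (k H(sigma)) <= exp (k^2 n / 2) for every sigma, and Fubini's theorem integrates this
  over P.
*)

section \<open>Real inequalities\<close>

lemma ln_ge_two_mul_diff_div_add:
  fixes x :: real
  assumes "1 \<le> x"
  shows "2 * (x - 1) / (x + 1) \<le> ln x"
proof -
  let ?f = "\<lambda>x::real. ln x - 2 * (x - 1) / (x + 1)"
  have "?f 1 \<le> ?f x"
  proof (rule DERIV_nonneg_imp_nondecreasing[OF assms])
    fix y :: real
    assume y: "1 \<le> y" "y \<le> x"
    have "DERIV ?f y :> 1 / y - 4 / (y + 1)\<^sup>2"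
      using y by (auto intro!: derivative_eq_intros simp: field_simps power2_eq_square)
    moreover have "1 / y - 4 / (y + 1)\<^sup>2 = (y - 1)\<^sup>2 / (y * (y + 1)\<^sup>2)"
      using y by (simp add: divide_simps power2_eq_square) algebra
    ultimately show "\<exists>d. DERIV ?f y :> d \<and> 0 \<le> d"
      using y by force
  qed
  then show ?thesis
    by simp
qed

(* The logarithmic mean (a - b) / (ln a - ln b) is at most the arithmetic mean. *)
lemma sq_diff_le_diff_ln_mult_mean:
  fixes a b :: real
  assumes "0 < a" "0 < b"
  shows "(a - b)\<^sup>2 \<le> (a - b) * (ln a - ln b) * ((a + b) / 2)"
proof -
  have ordered: "(a - b)\<^sup>2 \<le> (a - b) * (ln a - ln b) * ((a + b) / 2)"
    if "0 < b" "b \<le> a" for a b :: real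
  proof -
    define x where "x = a / b"
    have x: "1 \<le> x" "a = b * x"
      using that by (simp_all add: x_def)
    have "2 * (x - 1) \<le> ln x * (x + 1)"
      using ln_ge_two_mul_diff_div_add[OF x(1)] x(1) by (simp add: field_simps)
    have ln_a: "ln a - ln b = ln x"
      using that x by (simp add: ln_mult)
    have "(a - b)\<^sup>2 = b\<^sup>2 * (x - 1) * (2 * (x - 1)) / 2"
      using x(2) by (simp add: power2_eq_square algebra_simps)
    also have "\<dots> \<le> b\<^sup>2 * (x - 1) * (ln x * (x + 1)) / 2"
      using \<open>2 * (x - 1) \<le> ln x * (x + 1)\<close> x(1) by (intro divide_right_mono mult_left_mono) auto
    also have "\<dots> = (a - b) * (ln a - ln b) * ((a + b) / 2)"
      unfolding ln_a by (simp add: x(2) power2_eq_square field_simps)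
    finally show ?thesis .
  qed
  show ?thesis
  proof (cases "b \<le> a")
    case True
    then show ?thesis using ordered assms by blast
  next
    case False
    then show ?thesis
      using ordered[of a b] assms by (simp add: power2_eq_square algebra_simps)
  qed
qed

lemma diff_mult_diff_ln_nonneg:
  fixes a b :: real
  assumes "0 < a" "0 < b"
  shows "0 \<le> (a - b) * (ln a - ln b)"
  using assms by (cases "b \<le> a") (auto intro: mult_nonneg_nonneg mult_nonpos_nonpos)

lemma abs_exp_minus_one_minus_le:
  fixes x :: real
  shows "\<bar>exp x - 1 - x\<bar> \<le> x\<^sup>2 * exp \<bar>x\<bar>"
proof -
  have "0 \<le> exp x - 1 - x"
    using exp_ge_add_one_self[of x] by linarith
  then show ?thesis
    using Taylor_exp_field[of x 1] by (simp add: numeral_2_eq_2 mult.commute)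
qed

lemma abs_exp_difference_quotient_le:
  fixes \<beta> t y :: real
  assumes "t \<noteq> 0" "\<bar>t\<bar> \<le> 1"
  shows "\<bar>(exp ((\<beta> + t) * y) - exp (\<beta> * y)) / t - y * exp (\<beta> * y)\<bar>
    \<le> \<bar>t\<bar> * (y\<^sup>2 * exp \<bar>y\<bar> * exp (\<beta> * y))"
proof -
  have "\<bar>exp (t * y) - 1 - t * y\<bar> \<le> (t * y)\<^sup>2 * exp \<bar>t * y\<bar>"
    by (rule abs_exp_minus_one_minus_le)
  also have "\<dots> \<le> (t * y)\<^sup>2 * exp \<bar>y\<bar>"
    using assms by (intro mult_left_mono) (simp_all add: abs_mult mult_left_le_one_le)
  finally have taylor: "\<bar>exp (t * y) - 1 - t * y\<bar> \<le> t\<^sup>2 * (y\<^sup>2 * exp \<bar>y\<bar>)"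
    by (simp add: power_mult_distrib mult.assoc)
  have "t\<^sup>2 / \<bar>t\<bar> = \<bar>t\<bar>"
    using assms by (cases "0 \<le> t") (simp_all add: power2_eq_square)
  have "exp ((\<beta> + t) * y) = exp (\<beta> * y) * exp (t * y)"
    by (simp add: distrib_right exp_add)
  then have "(exp ((\<beta> + t) * y) - exp (\<beta> * y)) / t - y * exp (\<beta> * y)
      = exp (\<beta> * y) * (exp (t * y) - 1 - t * y) / t"
    using assms by (simp add: field_simps)
  then have "\<bar>(exp ((\<beta> + t) * y) - exp (\<beta> * y)) / t - y * exp (\<beta> * y)\<bar>
      = exp (\<beta> * y) * \<bar>exp (t * y) - 1 - t * y\<bar> / \<bar>t\<bar>"
    by (simp add: abs_mult)
  also have "\<dots> \<le> exp (\<beta> * y) * (t\<^sup>2 * (y\<^sup>2 * exp \<bar>y\<bar>)) / \<bar>t\<bar>"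
    using taylor by (intro divide_right_mono mult_left_mono) auto
  also have "\<dots> = t\<^sup>2 / \<bar>t\<bar> * (y\<^sup>2 * exp \<bar>y\<bar> * exp (\<beta> * y))"
    by simp
  finally show ?thesis
    unfolding \<open>t\<^sup>2 / \<bar>t\<bar> = \<bar>t\<bar>\<close> .
qed

lemma sq_le_two_mul_exp_abs:
  fixes x :: real
  shows "x\<^sup>2 \<le> 2 * exp \<bar>x\<bar>"
  using exp_lower_Taylor_quadratic[of "\<bar>x\<bar>"] by simp

lemma exp_abs_le_exp_add_exp_minus:
  fixes x :: real
  shows "exp \<bar>x\<bar> \<le> exp x + exp (- x)"
  by (cases "0 \<le> x") (auto simp: add_increasing add_increasing2)

lemma le_sqrt_mult_of_forall_le_amgm:
  fixes I a b :: real
  assumes "0 \<le> a" "0 \<le> b" and amgm: "\<And>t. 0 < t \<Longrightarrow> I \<le> (t * a + b / t) / 2"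
  shows "I \<le> sqrt (a * b)"
proof (cases "0 < a \<and> 0 < b")
  case True
  have "I \<le> (sqrt b / sqrt a * a + b / (sqrt b / sqrt a)) / 2"
    using True by (intro amgm) simp
  also have "\<dots> = sqrt (a * b)"
    using True by (simp add: field_simps real_sqrt_mult)
  finally show ?thesis .
next
  case False
  then have "a = 0 \<or> b = 0"
    using assms(1,2) by auto
  have "I \<le> (a + b) / 2 / real k" if "1 \<le> k" for k
    using \<open>a = 0 \<or> b = 0\<close>
  proof
    assume "a = 0"
    then show ?thesis
      using amgm[of "real k"] that by simp
  next
    assume "b = 0"
    then show ?thesis
      using amgm[of "1 / real k"] that by simp
  qed
  then have "I \<le> 0"
    by (intro LIMSEQ_le_const[OF lim_const_over_n]) blast
  then show ?thesis
    using \<open>a = 0 \<or> b = 0\<close> by auto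
qed

lemma sq_le_Young:
  fixes s a t :: real
  assumes "0 < t"
  shows "s\<^sup>2 \<le> (1 + t) * a\<^sup>2 + (1 + 1 / t) * (a - s)\<^sup>2"
proof -
  have "t * ((1 + t) * a\<^sup>2 + (1 + 1 / t) * (a - s)\<^sup>2 - s\<^sup>2) = ((t + 1) * a - s)\<^sup>2"
    using assms by (simp add: field_simps power2_eq_square)
  then have "0 \<le> t * ((1 + t) * a\<^sup>2 + (1 + 1 / t) * (a - s)\<^sup>2 - s\<^sup>2)"
    by simp
  then show ?thesis
    using assms by (simp add: zero_le_mult_iff)
qed

lemma abs_suminf_le_const:
  fixes f :: "nat \<Rightarrow> real"
  assumes "summable f" "\<And>N. \<bar>\<Sum>i<N. f i\<bar> \<le> B"
  shows "\<bar>suminf f\<bar> \<le> B"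
proof -
  have "suminf f \<le> B"
    using assms by (intro suminf_le_const) (auto simp: abs_le_iff)
  moreover have "suminf (\<lambda>i. - f i) \<le> B"
    using assms by (auto intro!: suminf_le_const summable_minus simp: abs_le_iff sum_negf)
  ultimately show ?thesis
    using suminf_minus[OF assms(1)] by (simp add: abs_le_iff)
qed

lemma summable_mult_of_bounded_sum_sq:
  fixes a b :: "nat \<Rightarrow> real"
  assumes "\<And>N. (\<Sum>i<N. (a i)\<^sup>2) \<le> A" "\<And>N. (\<Sum>i<N. (b i)\<^sup>2) \<le> B"
  shows "summable (\<lambda>i. a i * b i)"
proof (rule summable_comparison_test')
  show "summable (\<lambda>i. ((a i)\<^sup>2 + (b i)\<^sup>2) / 2)"
    using assms by (intro summable_divide summable_add summableI_nonneg_bounded) auto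
  show "norm (a i * b i) \<le> ((a i)\<^sup>2 + (b i)\<^sup>2) / 2" for i
    using sum_squares_bound[of "\<bar>a i\<bar>" "\<bar>b i\<bar>"] by (simp add: abs_mult)
qed

lemma integral_abs_le_sqrt_mult:
  fixes x D A :: "'a \<Rightarrow> real"
  assumes "integrable M x" "integrable M D" "integrable M A"
    and sq_le: "\<And>\<omega>. \<omega> \<in> space M \<Longrightarrow> (x \<omega>)\<^sup>2 \<le> D \<omega> * A \<omega>"
    and D_nonneg: "\<And>\<omega>. \<omega> \<in> space M \<Longrightarrow> 0 \<le> D \<omega>"
    and A_nonneg: "\<And>\<omega>. \<omega> \<in> space M \<Longrightarrow> 0 \<le> A \<omega>"
  shows "(\<integral>\<omega>. \<bar>x \<omega>\<bar> \<partial>M) \<le> sqrt ((\<integral>\<omega>. D \<omega> \<partial>M) * (\<integral>\<omega>. A \<omega> \<partial>M))"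
proof (rule le_sqrt_mult_of_forall_le_amgm)
  show "0 \<le> (\<integral>\<omega>. D \<omega> \<partial>M)" "0 \<le> (\<integral>\<omega>. A \<omega> \<partial>M)"
    using D_nonneg A_nonneg by (simp_all add: integral_nonneg)
  fix t :: real
  assume "0 < t"
  have "\<bar>x \<omega>\<bar> \<le> (t * D \<omega> + A \<omega> / t) / 2" if "\<omega> \<in> space M" for \<omega>
  proof -
    have "(2 * \<bar>x \<omega>\<bar>)\<^sup>2 \<le> 4 * (D \<omega> * A \<omega>)"
      using sq_le[OF that] by (simp add: power_mult_distrib)
    also have "\<dots> \<le> (t * D \<omega> - A \<omega> / t)\<^sup>2 + 4 * (D \<omega> * A \<omega>)"
      by simp
    also have "\<dots> = (t * D \<omega> + A \<omega> / t)\<^sup>2"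
      using \<open>0 < t\<close> unfolding power2_sum power2_diff by simp
    finally have "(2 * \<bar>x \<omega>\<bar>)\<^sup>2 \<le> (t * D \<omega> + A \<omega> / t)\<^sup>2" .
    moreover have "0 \<le> t * D \<omega> + A \<omega> / t"
      using D_nonneg[OF that] A_nonneg[OF that] \<open>0 < t\<close> by simp
    ultimately have "2 * \<bar>x \<omega>\<bar> \<le> t * D \<omega> + A \<omega> / t"
      by (rule power2_le_imp_le)
    then show ?thesis
      by simp
  qed
  then have "(\<integral>\<omega>. \<bar>x \<omega>\<bar> \<partial>M) \<le> (\<integral>\<omega>. (t * D \<omega> + A \<omega> / t) / 2 \<partial>M)"
    using assms by (intro integral_mono) auto
  also have "\<dots> = (t * (\<integral>\<omega>. D \<omega> \<partial>M) + (\<integral>\<omega>. A \<omega> \<partial>M) / t) / 2"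
    using assms by simp
  finally show "(\<integral>\<omega>. \<bar>x \<omega>\<bar> \<partial>M) \<le> (t * (\<integral>\<omega>. D \<omega> \<partial>M) + (\<integral>\<omega>. A \<omega> \<partial>M) / t) / 2" .
qed

lemma integrable_exp_mult_of_int:
  fixes h :: "'a \<Rightarrow> real"
  assumes [measurable]: "h \<in> borel_measurable M"
    and int: "\<And>k::int. integrable M (\<lambda>\<sigma>. exp (real_of_int k * h \<sigma>))"
  shows "integrable M (\<lambda>\<sigma>. exp (\<beta> * h \<sigma>))"
proof (rule Bochner_Integration.integrable_bound)
  show "integrable M (\<lambda>\<sigma>. exp (of_int \<lfloor>\<beta>\<rfloor> * h \<sigma>) + exp (of_int \<lceil>\<beta>\<rceil> * h \<sigma>))"
    using int by auto
  have "exp (\<beta> * h \<sigma>) \<le> exp (of_int \<lfloor>\<beta>\<rfloor> * h \<sigma>) + exp (of_int \<lceil>\<beta>\<rceil> * h \<sigma>)" for \<sigma>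
  proof -
    have "\<beta> * h \<sigma> \<le> of_int \<lfloor>\<beta>\<rfloor> * h \<sigma> \<or> \<beta> * h \<sigma> \<le> of_int \<lceil>\<beta>\<rceil> * h \<sigma>"
      by (cases "0 \<le> h \<sigma>") (auto intro: mult_right_mono mult_right_mono_neg)
    then show ?thesis
      by (auto intro: add_increasing add_increasing2)
  qed
  then show "AE \<sigma> in M. norm (exp (\<beta> * h \<sigma>))
      \<le> norm (exp (of_int \<lfloor>\<beta>\<rfloor> * h \<sigma>) + exp (of_int \<lceil>\<beta>\<rceil> * h \<sigma>))"
    by simp
qed measurable

lemma (in pair_sigma_finite) AE_nn_integral_finite_of_bounded:
  assumes [measurable]: "(\<lambda>(x, y). f x y) \<in> borel_measurable (M1 \<Otimes>\<^sub>M M2)"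
    and bounded: "\<And>y. y \<in> space M2 \<Longrightarrow> (\<integral>\<^sup>+x. f x y \<partial>M1) \<le> C"
    and "C < \<infinity>" "emeasure M2 (space M2) < \<infinity>"
  shows "AE x in M1. (\<integral>\<^sup>+y. f x y \<partial>M2) \<noteq> \<infinity>"
proof (rule nn_integral_PInf_AE)
  have "(\<integral>\<^sup>+x. (\<integral>\<^sup>+y. f x y \<partial>M2) \<partial>M1) = (\<integral>\<^sup>+y. (\<integral>\<^sup>+x. f x y \<partial>M1) \<partial>M2)"
    using Fubini'[OF assms(1)] by simp
  also have "\<dots> \<le> (\<integral>\<^sup>+y. C \<partial>M2)"
    using bounded by (intro nn_integral_mono) auto
  also have "\<dots> < \<infinity>"
    using assms(3,4) by (simp add: ennreal_mult_less_top)
  finally show "(\<integral>\<^sup>+x. (\<integral>\<^sup>+y. f x y \<partial>M2) \<partial>M1) \<noteq> \<infinity>"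
    by simp
qed measurable

lemma (in pair_sigma_finite) AE_integrable_exp_of_nn_integral_bound:
  assumes H_measurable[measurable]: "(\<lambda>(x, y). H x y) \<in> borel_measurable (M1 \<Otimes>\<^sub>M M2)"
    and bound: "\<And>k y. y \<in> space M2 \<Longrightarrow> (\<integral>\<^sup>+x. exp (k * H x y) \<partial>M1) \<le> ennreal (c k)"
    and "emeasure M2 (space M2) < \<infinity>"
  shows "AE x in M1. \<forall>\<beta>. integrable M2 (\<lambda>y. exp (\<beta> * H x y))"
proof -
  have "AE x in M1. (\<integral>\<^sup>+y. exp (k * H x y) \<partial>M2) \<noteq> \<infinity>" for k :: real
    using bound assms(3) by (intro AE_nn_integral_finite_of_bounded[where C = "ennreal (c k)"]) auto
  then have "AE x in M1. \<forall>k::int. (\<integral>\<^sup>+y. exp (k * H x y) \<partial>M2) \<noteq> \<infinity>"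
    by (simp add: AE_all_countable)
  then show ?thesis
  proof (rule AE_mp, intro AE_I2 impI allI)
    fix x \<beta>
    assume "x \<in> space M1" and finite: "\<forall>k::int. (\<integral>\<^sup>+y. exp (k * H x y) \<partial>M2) \<noteq> \<infinity>"
    have [measurable]: "H x \<in> borel_measurable M2"
      using measurable_comp[OF measurable_Pair1'[OF \<open>x \<in> space M1\<close>] H_measurable]
      by (simp add: comp_def)
    have "integrable M2 (\<lambda>y. exp (real_of_int k * H x y))" for k :: int
    proof (rule integrableI_nonneg)
      show "(\<integral>\<^sup>+y. ennreal (exp (real_of_int k * H x y)) \<partial>M2) < \<infinity>"
        using finite by (simp add: less_top)
    qed simp_all
    then show "integrable M2 (\<lambda>y. exp (\<beta> * H x y))"
      by (rule integrable_exp_mult_of_int[rotated]) measurable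
  qed
qed

section \<open>Gibbs measures with finite exponential moments\<close>

locale gibbs_family = prob_space P for P :: "'s measure" +
  fixes h :: "'s \<Rightarrow> real"
  assumes h_measurable[measurable]: "h \<in> borel_measurable P"
    and integrable_exp: "\<And>\<beta>. integrable P (\<lambda>\<sigma>. exp (\<beta> * h \<sigma>))"
begin

lemma integrable_mult_exp_of_bound:
  assumes [measurable]: "f \<in> borel_measurable P"
    and bound: "\<And>\<sigma>. \<bar>f \<sigma>\<bar> \<le> C * exp (c * \<bar>h \<sigma>\<bar>)"
  shows "integrable P (\<lambda>\<sigma>. f \<sigma> * exp (\<beta> * h \<sigma>))"
proof (rule Bochner_Integration.integrable_bound)
  show "integrable P (\<lambda>\<sigma>. C * (exp ((\<beta> + c) * h \<sigma>) + exp ((\<beta> - c) * h \<sigma>)))"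
    using integrable_exp by auto
  have "0 \<le> C * exp (c * \<bar>h undefined\<bar>)"
    using bound abs_ge_zero order_trans by blast
  then have "0 \<le> C"
    by (simp add: zero_le_mult_iff)
  have "\<bar>f \<sigma> * exp (\<beta> * h \<sigma>)\<bar> \<le> C * (exp ((\<beta> + c) * h \<sigma>) + exp ((\<beta> - c) * h \<sigma>))" for \<sigma>
  proof -
    have "exp (c * \<bar>h \<sigma>\<bar>) \<le> exp \<bar>c * h \<sigma>\<bar>"
      by (simp add: abs_mult mult_right_mono)
    also have "\<dots> \<le> exp (c * h \<sigma>) + exp (- (c * h \<sigma>))"
      by (rule exp_abs_le_exp_add_exp_minus)
    finally have "\<bar>f \<sigma>\<bar> \<le> C * (exp (c * h \<sigma>) + exp (- (c * h \<sigma>)))"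
      using bound[of \<sigma>] \<open>0 \<le> C\<close> by (meson mult_left_mono order_trans)
    then have "\<bar>f \<sigma>\<bar> * exp (\<beta> * h \<sigma>) \<le> C * (exp (c * h \<sigma>) + exp (- (c * h \<sigma>))) * exp (\<beta> * h \<sigma>)"
      by (rule mult_right_mono) simp
    also have "\<dots> = C * (exp ((\<beta> + c) * h \<sigma>) + exp ((\<beta> - c) * h \<sigma>))"
      by (simp add: exp_add[symmetric] algebra_simps)
    finally show ?thesis
      by (simp add: abs_mult)
  qed
  then show "AE \<sigma> in P. norm (f \<sigma> * exp (\<beta> * h \<sigma>))
      \<le> norm (C * (exp ((\<beta> + c) * h \<sigma>) + exp ((\<beta> - c) * h \<sigma>)))"
    using \<open>0 \<le> C\<close> by simp
qed measurable

lemma integrable_bounded_mult_exp: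
  assumes "f \<in> borel_measurable P" "\<And>\<sigma>. \<bar>f \<sigma>\<bar> \<le> B"
  shows "integrable P (\<lambda>\<sigma>. f \<sigma> * exp (\<beta> * h \<sigma>))"
  using assms by (intro integrable_mult_exp_of_bound[where C = B and c = 0]) auto

lemma integrable_h_mult_exp: "integrable P (\<lambda>\<sigma>. h \<sigma> * exp (\<beta> * h \<sigma>))"
proof (rule integrable_mult_exp_of_bound[where C = 1 and c = 1])
  show "\<bar>h \<sigma>\<bar> \<le> 1 * exp (1 * \<bar>h \<sigma>\<bar>)" for \<sigma>
    using exp_ge_add_one_self[of "\<bar>h \<sigma>\<bar>"] by (simp only: mult_1)
qed measurable

lemma integrable_sq_mult_exp_abs_mult_exp:
  "integrable P (\<lambda>\<sigma>. (h \<sigma>)\<^sup>2 * exp \<bar>h \<sigma>\<bar> * exp (\<beta> * h \<sigma>))"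
proof (rule integrable_mult_exp_of_bound[where C = 2 and c = 2])
  fix \<sigma>
  have "(h \<sigma>)\<^sup>2 * exp \<bar>h \<sigma>\<bar> \<le> 2 * exp \<bar>h \<sigma>\<bar> * exp \<bar>h \<sigma>\<bar>"
    using sq_le_two_mul_exp_abs[of "h \<sigma>"] by (rule mult_right_mono) simp
  also have "\<dots> = 2 * exp (2 * \<bar>h \<sigma>\<bar>)"
    by (simp add: exp_add[symmetric])
  finally show "\<bar>(h \<sigma>)\<^sup>2 * exp \<bar>h \<sigma>\<bar>\<bar> \<le> 2 * exp (2 * \<bar>h \<sigma>\<bar>)"
    by simp
qed measurable

lemma partition_fn_pos: "0 < partition_fn P h \<beta>"
proof -
  have "(\<integral>\<sigma>. exp (\<beta> * h \<sigma>) \<partial>P) \<noteq> 0"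
    using integral_nonneg_eq_0_iff_AE[OF integrable_exp] by simp
  then show ?thesis
    unfolding partition_fn_def by (simp add: less_le integral_nonneg)
qed

lemma partition_fn_difference_quotient_bound:
  assumes "t \<noteq> 0" "\<bar>t\<bar> \<le> 1"
  shows "\<bar>(partition_fn P h (\<beta> + t) - partition_fn P h \<beta>) / t - (\<integral>\<sigma>. h \<sigma> * exp (\<beta> * h \<sigma>) \<partial>P)\<bar>
    \<le> (\<integral>\<sigma>. (h \<sigma>)\<^sup>2 * exp \<bar>h \<sigma>\<bar> * exp (\<beta> * h \<sigma>) \<partial>P) * \<bar>t\<bar>"
proof -
  define R where
    "R \<sigma> = (exp ((\<beta> + t) * h \<sigma>) - exp (\<beta> * h \<sigma>)) / t - h \<sigma> * exp (\<beta> * h \<sigma>)" for \<sigma>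
  have "(partition_fn P h (\<beta> + t) - partition_fn P h \<beta>) / t - (\<integral>\<sigma>. h \<sigma> * exp (\<beta> * h \<sigma>) \<partial>P)
      = (\<integral>\<sigma>. R \<sigma> \<partial>P)"
    unfolding R_def partition_fn_def using integrable_exp integrable_h_mult_exp by simp
  then have "\<bar>(partition_fn P h (\<beta> + t) - partition_fn P h \<beta>) / t - (\<integral>\<sigma>. h \<sigma> * exp (\<beta> * h \<sigma>) \<partial>P)\<bar>
      \<le> (\<integral>\<sigma>. \<bar>R \<sigma>\<bar> \<partial>P)"
    using integral_abs_bound by simp
  also have "\<dots> \<le> (\<integral>\<sigma>. \<bar>t\<bar> * ((h \<sigma>)\<^sup>2 * exp \<bar>h \<sigma>\<bar> * exp (\<beta> * h \<sigma>)) \<partial>P)"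
    unfolding R_def using assms integrable_exp integrable_h_mult_exp integrable_sq_mult_exp_abs_mult_exp
    by (intro integral_mono abs_exp_difference_quotient_le) auto
  also have "\<dots> = (\<integral>\<sigma>. (h \<sigma>)\<^sup>2 * exp \<bar>h \<sigma>\<bar> * exp (\<beta> * h \<sigma>) \<partial>P) * \<bar>t\<bar>"
    by (simp add: mult.commute)
  finally show ?thesis .
qed

lemma has_field_derivative_partition_fn:
  "(partition_fn P h has_field_derivative (\<integral>\<sigma>. h \<sigma> * exp (\<beta> * h \<sigma>) \<partial>P)) (at \<beta>)"
proof -
  let ?K = "\<integral>\<sigma>. (h \<sigma>)\<^sup>2 * exp \<bar>h \<sigma>\<bar> * exp (\<beta> * h \<sigma>) \<partial>P"
  have "((\<lambda>t. (partition_fn P h (\<beta> + t) - partition_fn P h \<beta>) / t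
      - (\<integral>\<sigma>. h \<sigma> * exp (\<beta> * h \<sigma>) \<partial>P)) \<longlongrightarrow> 0) (at 0)"
  proof (rule Lim_null_comparison)
    show "\<forall>\<^sub>F t in at 0. norm ((partition_fn P h (\<beta> + t) - partition_fn P h \<beta>) / t
        - (\<integral>\<sigma>. h \<sigma> * exp (\<beta> * h \<sigma>) \<partial>P)) \<le> ?K * \<bar>t\<bar>"
      unfolding eventually_at using partition_fn_difference_quotient_bound
      by (intro exI[of _ 1]) auto
    show "((\<lambda>t. ?K * \<bar>t\<bar>) \<longlongrightarrow> 0) (at 0)"
      by (auto intro!: tendsto_eq_intros)
  qed
  then show ?thesis
    unfolding DERIV_def by (rule LIM_zero_cancel)
qed

lemma deriv_free_energy:
  assumes "0 < n"
  shows "deriv (free_energy n P h) \<beta> = gibbs_avg P h \<beta> h / real n"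
proof (rule DERIV_imp_deriv)
  have "free_energy n P h = (\<lambda>\<beta>. ln (partition_fn P h \<beta>) / real n)"
    by (simp add: free_energy_def fun_eq_iff)
  then show "(free_energy n P h has_field_derivative gibbs_avg P h \<beta> h / real n) (at \<beta>)"
    using has_field_derivative_partition_fn partition_fn_pos assms
    by (auto intro!: derivative_eq_intros simp: gibbs_avg_def field_simps)
qed

definition gibbs_density :: "real \<Rightarrow> 's \<Rightarrow> real" where
  "gibbs_density \<beta> \<sigma> = exp (\<beta> * h \<sigma>) / partition_fn P h \<beta>"

lemma gibbs_density_pos: "0 < gibbs_density \<beta> \<sigma>"
  using partition_fn_pos by (simp add: gibbs_density_def)

lemma integrable_gibbs_density: "integrable P (gibbs_density \<beta>)"
  unfolding gibbs_density_def by (intro integrable_divide_zero integrable_exp)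

lemma integral_gibbs_density: "(\<integral>\<sigma>. gibbs_density \<beta> \<sigma> \<partial>P) = 1"
  using partition_fn_pos[of \<beta>] by (simp add: gibbs_density_def partition_fn_def)

lemma gibbs_avg_eq_integral_density:
  "gibbs_avg P h \<beta> f = (\<integral>\<sigma>. f \<sigma> * gibbs_density \<beta> \<sigma> \<partial>P)"
  by (simp add: gibbs_avg_def gibbs_density_def)

lemma integrable_mult_gibbs_density:
  assumes "integrable P (\<lambda>\<sigma>. f \<sigma> * exp (\<beta> * h \<sigma>))"
  shows "integrable P (\<lambda>\<sigma>. f \<sigma> * gibbs_density \<beta> \<sigma>)"
  using assms by (simp add: gibbs_density_def)

(* Twice the total variation distance between the two Gibbs measures. *)
definition gibbs_L1_dist :: "real \<Rightarrow> real \<Rightarrow> real" where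
  "gibbs_L1_dist \<beta>\<^sub>1 \<beta>\<^sub>0 = (\<integral>\<sigma>. \<bar>gibbs_density \<beta>\<^sub>1 \<sigma> - gibbs_density \<beta>\<^sub>0 \<sigma>\<bar> \<partial>P)"

lemma
  shows integrable_symmetric_relative_entropy_density:
      "integrable P (\<lambda>\<sigma>. (gibbs_density \<beta>\<^sub>1 \<sigma> - gibbs_density \<beta>\<^sub>0 \<sigma>)
        * (ln (gibbs_density \<beta>\<^sub>1 \<sigma>) - ln (gibbs_density \<beta>\<^sub>0 \<sigma>)))"
    and integral_symmetric_relative_entropy_density:
      "(\<integral>\<sigma>. (gibbs_density \<beta>\<^sub>1 \<sigma> - gibbs_density \<beta>\<^sub>0 \<sigma>)
        * (ln (gibbs_density \<beta>\<^sub>1 \<sigma>) - ln (gibbs_density \<beta>\<^sub>0 \<sigma>)) \<partial>P)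
      = (\<beta>\<^sub>1 - \<beta>\<^sub>0) * (gibbs_avg P h \<beta>\<^sub>1 h - gibbs_avg P h \<beta>\<^sub>0 h)"
proof -
  let ?\<rho>\<^sub>1 = "gibbs_density \<beta>\<^sub>1" and ?\<rho>\<^sub>0 = "gibbs_density \<beta>\<^sub>0"
  define c where "c = ln (partition_fn P h \<beta>\<^sub>1) - ln (partition_fn P h \<beta>\<^sub>0)"
  have ln_density: "ln (?\<rho>\<^sub>1 \<sigma>) - ln (?\<rho>\<^sub>0 \<sigma>) = (\<beta>\<^sub>1 - \<beta>\<^sub>0) * h \<sigma> - c" for \<sigma>
    using partition_fn_pos[of \<beta>\<^sub>0] partition_fn_pos[of \<beta>\<^sub>1]
    by (simp add: gibbs_density_def c_def ln_div algebra_simps)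
  have expand: "(?\<rho>\<^sub>1 \<sigma> - ?\<rho>\<^sub>0 \<sigma>) * (ln (?\<rho>\<^sub>1 \<sigma>) - ln (?\<rho>\<^sub>0 \<sigma>))
      = (\<beta>\<^sub>1 - \<beta>\<^sub>0) * (h \<sigma> * ?\<rho>\<^sub>1 \<sigma>) - (\<beta>\<^sub>1 - \<beta>\<^sub>0) * (h \<sigma> * ?\<rho>\<^sub>0 \<sigma>)
        - (c * ?\<rho>\<^sub>1 \<sigma> - c * ?\<rho>\<^sub>0 \<sigma>)" for \<sigma>
    unfolding ln_density by (simp add: algebra_simps)
  have integrable_h_density: "integrable P (\<lambda>\<sigma>. h \<sigma> * gibbs_density \<beta> \<sigma>)" for \<beta>
    by (intro integrable_mult_gibbs_density integrable_h_mult_exp)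
  show "integrable P (\<lambda>\<sigma>. (?\<rho>\<^sub>1 \<sigma> - ?\<rho>\<^sub>0 \<sigma>) * (ln (?\<rho>\<^sub>1 \<sigma>) - ln (?\<rho>\<^sub>0 \<sigma>)))"
    unfolding expand using integrable_h_density integrable_gibbs_density by simp
  show "(\<integral>\<sigma>. (?\<rho>\<^sub>1 \<sigma> - ?\<rho>\<^sub>0 \<sigma>) * (ln (?\<rho>\<^sub>1 \<sigma>) - ln (?\<rho>\<^sub>0 \<sigma>)) \<partial>P)
      = (\<beta>\<^sub>1 - \<beta>\<^sub>0) * (gibbs_avg P h \<beta>\<^sub>1 h - gibbs_avg P h \<beta>\<^sub>0 h)"
    unfolding expand gibbs_avg_eq_integral_density
    using integrable_h_density integrable_gibbs_density integral_gibbs_density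
    by (simp add: algebra_simps)
qed

lemma gibbs_L1_dist_le:
  "gibbs_L1_dist \<beta>\<^sub>1 \<beta>\<^sub>0
    \<le> sqrt ((\<beta>\<^sub>1 - \<beta>\<^sub>0) * (gibbs_avg P h \<beta>\<^sub>1 h - gibbs_avg P h \<beta>\<^sub>0 h))"
proof -
  let ?\<rho>\<^sub>1 = "gibbs_density \<beta>\<^sub>1" and ?\<rho>\<^sub>0 = "gibbs_density \<beta>\<^sub>0"
  have "(\<integral>\<sigma>. \<bar>?\<rho>\<^sub>1 \<sigma> - ?\<rho>\<^sub>0 \<sigma>\<bar> \<partial>P)
      \<le> sqrt ((\<integral>\<sigma>. (?\<rho>\<^sub>1 \<sigma> - ?\<rho>\<^sub>0 \<sigma>) * (ln (?\<rho>\<^sub>1 \<sigma>) - ln (?\<rho>\<^sub>0 \<sigma>)) \<partial>P)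
        * (\<integral>\<sigma>. (?\<rho>\<^sub>1 \<sigma> + ?\<rho>\<^sub>0 \<sigma>) / 2 \<partial>P))"
  proof (rule integral_abs_le_sqrt_mult)
    show "integrable P (\<lambda>\<sigma>. ?\<rho>\<^sub>1 \<sigma> - ?\<rho>\<^sub>0 \<sigma>)" "integrable P (\<lambda>\<sigma>. (?\<rho>\<^sub>1 \<sigma> + ?\<rho>\<^sub>0 \<sigma>) / 2)"
      using integrable_gibbs_density by simp_all
    fix \<sigma>
    show "(?\<rho>\<^sub>1 \<sigma> - ?\<rho>\<^sub>0 \<sigma>)\<^sup>2 \<le> (?\<rho>\<^sub>1 \<sigma> - ?\<rho>\<^sub>0 \<sigma>) * (ln (?\<rho>\<^sub>1 \<sigma>) - ln (?\<rho>\<^sub>0 \<sigma>))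
        * ((?\<rho>\<^sub>1 \<sigma> + ?\<rho>\<^sub>0 \<sigma>) / 2)"
      using sq_diff_le_diff_ln_mult_mean gibbs_density_pos by simp
    show "0 \<le> (?\<rho>\<^sub>1 \<sigma> + ?\<rho>\<^sub>0 \<sigma>) / 2"
      using gibbs_density_pos[of \<beta>\<^sub>0 \<sigma>] gibbs_density_pos[of \<beta>\<^sub>1 \<sigma>] by simp
    show "0 \<le> (?\<rho>\<^sub>1 \<sigma> - ?\<rho>\<^sub>0 \<sigma>) * (ln (?\<rho>\<^sub>1 \<sigma>) - ln (?\<rho>\<^sub>0 \<sigma>))"
      using gibbs_density_pos gibbs_density_pos by (rule diff_mult_diff_ln_nonneg)
  qed (rule integrable_symmetric_relative_entropy_density)
  then show ?thesis
    using integrable_gibbs_density integral_gibbs_density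
    by (simp add: gibbs_L1_dist_def integral_symmetric_relative_entropy_density)
qed

lemma gibbs_L1_dist_le_free_energy:
  assumes "0 < n"
  shows "gibbs_L1_dist \<beta>\<^sub>1 \<beta>\<^sub>0 \<le> sqrt (real n * (\<beta>\<^sub>1 - \<beta>\<^sub>0)
    * (deriv (free_energy n P h) \<beta>\<^sub>1 - deriv (free_energy n P h) \<beta>\<^sub>0))"
proof -
  have "real n * (\<beta>\<^sub>1 - \<beta>\<^sub>0) * (deriv (free_energy n P h) \<beta>\<^sub>1 - deriv (free_energy n P h) \<beta>\<^sub>0)
      = (\<beta>\<^sub>1 - \<beta>\<^sub>0) * (gibbs_avg P h \<beta>\<^sub>1 h - gibbs_avg P h \<beta>\<^sub>0 h)"
    using assms by (simp add: deriv_free_energy diff_divide_distrib[symmetric])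
  then show ?thesis
    using gibbs_L1_dist_le[of \<beta>\<^sub>1 \<beta>\<^sub>0] by (simp only:)
qed

lemma abs_gibbs_avg_diff_le:
  assumes "f \<in> borel_measurable P" "\<And>\<sigma>. \<bar>f \<sigma>\<bar> \<le> B"
  shows "\<bar>gibbs_avg P h \<beta>\<^sub>1 f - gibbs_avg P h \<beta>\<^sub>0 f\<bar> \<le> B * gibbs_L1_dist \<beta>\<^sub>1 \<beta>\<^sub>0"
proof -
  let ?\<delta> = "\<lambda>\<sigma>. gibbs_density \<beta>\<^sub>1 \<sigma> - gibbs_density \<beta>\<^sub>0 \<sigma>"
  have integrable_f: "integrable P (\<lambda>\<sigma>. f \<sigma> * gibbs_density \<beta> \<sigma>)" for \<beta>
    using assms by (intro integrable_mult_gibbs_density integrable_bounded_mult_exp)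
  then have integrable: "integrable P (\<lambda>\<sigma>. f \<sigma> * ?\<delta> \<sigma>)"
    by (simp add: right_diff_distrib)
  have "\<bar>gibbs_avg P h \<beta>\<^sub>1 f - gibbs_avg P h \<beta>\<^sub>0 f\<bar> = \<bar>\<integral>\<sigma>. f \<sigma> * ?\<delta> \<sigma> \<partial>P\<bar>"
    unfolding gibbs_avg_eq_integral_density using integrable_f by (simp add: right_diff_distrib)
  also have "\<dots> \<le> (\<integral>\<sigma>. \<bar>f \<sigma> * ?\<delta> \<sigma>\<bar> \<partial>P)"
    by (rule integral_abs_bound)
  also have "\<dots> \<le> (\<integral>\<sigma>. B * \<bar>?\<delta> \<sigma>\<bar> \<partial>P)"
    using integrable_abs[OF integrable] integrable_gibbs_density assms(2)
    by (intro integral_mono) (auto simp: abs_mult mult_right_mono)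
  finally show ?thesis
    by (simp add: gibbs_L1_dist_def)
qed

lemma gibbs_avg_sq_le:
  assumes "f \<in> borel_measurable P" "\<And>\<sigma>. \<bar>f \<sigma>\<bar> \<le> B"
  shows "(gibbs_avg P h \<beta> f)\<^sup>2 \<le> gibbs_avg P h \<beta> (\<lambda>\<sigma>. (f \<sigma>)\<^sup>2)"
proof -
  have "\<bar>(f \<sigma>)\<^sup>2\<bar> \<le> B\<^sup>2" for \<sigma>
    using power_mono[OF assms(2) abs_ge_zero, of \<sigma> 2] by simp
  then have integrable_sq: "integrable P (\<lambda>\<sigma>. (f \<sigma>)\<^sup>2 * gibbs_density \<beta> \<sigma>)"
    using assms(1) by (intro integrable_mult_gibbs_density integrable_bounded_mult_exp) auto
  have "\<bar>gibbs_avg P h \<beta> f\<bar> \<le> (\<integral>\<sigma>. \<bar>f \<sigma> * gibbs_density \<beta> \<sigma>\<bar> \<partial>P)"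
    unfolding gibbs_avg_eq_integral_density by (rule integral_abs_bound)
  also have "\<dots> \<le> sqrt ((\<integral>\<sigma>. (f \<sigma>)\<^sup>2 * gibbs_density \<beta> \<sigma> \<partial>P) * (\<integral>\<sigma>. gibbs_density \<beta> \<sigma> \<partial>P))"
    using assms integrable_sq integrable_gibbs_density gibbs_density_pos
    by (intro integral_abs_le_sqrt_mult integrable_mult_gibbs_density integrable_bounded_mult_exp
        integrable_sq integrable_gibbs_density)
      (auto simp: power2_eq_square less_imp_le)
  finally have bound: "\<bar>gibbs_avg P h \<beta> f\<bar> \<le> sqrt (gibbs_avg P h \<beta> (\<lambda>\<sigma>. (f \<sigma>)\<^sup>2))"
    unfolding gibbs_avg_eq_integral_density integral_gibbs_density by simp
  then have "0 \<le> gibbs_avg P h \<beta> (\<lambda>\<sigma>. (f \<sigma>)\<^sup>2)"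
    by (meson abs_ge_zero order_trans real_sqrt_ge_0_iff)
  then show ?thesis
    using power_mono[OF bound abs_ge_zero, of 2] by simp
qed

end

lemma gibbs_avg_sum:
  assumes "\<And>i. i \<in> I \<Longrightarrow> integrable P (\<lambda>\<sigma>. f i \<sigma> * exp (\<beta> * h \<sigma>))"
  shows "gibbs_avg P h \<beta> (\<lambda>\<sigma>. \<Sum>i\<in>I. f i \<sigma>) = (\<Sum>i\<in>I. gibbs_avg P h \<beta> (f i))"
  unfolding gibbs_avg_def using assms by (simp add: sum_distrib_right sum_divide_distrib)

lemma gibbs_avg_mult_left: "gibbs_avg P h \<beta> (\<lambda>\<sigma>. a * f \<sigma>) = a * gibbs_avg P h \<beta> f"
  by (simp add: gibbs_avg_def mult.assoc)

locale gibbs_features = gibbs_family P h for P :: "'s measure" and h +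
  fixes \<phi> :: "nat \<Rightarrow> 's \<Rightarrow> real" and B :: real
  assumes phi_measurable[measurable]: "\<And>i. \<phi> i \<in> borel_measurable P"
    and sum_sq_phi_le: "\<And>\<sigma> N. (\<Sum>i<N. (\<phi> i \<sigma>)\<^sup>2) \<le> B"
begin

lemma abs_phi_le: "\<bar>\<phi> i \<sigma>\<bar> \<le> sqrt B"
proof (rule real_le_rsqrt)
  have "(\<phi> i \<sigma>)\<^sup>2 \<le> (\<Sum>j<Suc i. (\<phi> j \<sigma>)\<^sup>2)"
    by (rule member_le_sum) auto
  then show "\<bar>\<phi> i \<sigma>\<bar>\<^sup>2 \<le> B"
    using sum_sq_phi_le[of \<sigma> "Suc i"] by simp
qed

lemma integrable_phi_mult_exp: "integrable P (\<lambda>\<sigma>. \<phi> i \<sigma> * exp (\<beta> * h \<sigma>))"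
  using abs_phi_le by (intro integrable_bounded_mult_exp) auto

lemma sum_sq_gibbs_avg_phi_le: "(\<Sum>i<N. (gibbs_avg P h \<beta> (\<phi> i))\<^sup>2) \<le> B"
proof -
  have integrable_sq: "integrable P (\<lambda>\<sigma>. (\<phi> i \<sigma>)\<^sup>2 * exp (\<beta> * h \<sigma>))" for i
    using power_mono[OF abs_phi_le abs_ge_zero, of i _ 2]
    by (intro integrable_bounded_mult_exp[where B = "(sqrt B)\<^sup>2"]) auto
  have "(\<Sum>i<N. (gibbs_avg P h \<beta> (\<phi> i))\<^sup>2) \<le> (\<Sum>i<N. gibbs_avg P h \<beta> (\<lambda>\<sigma>. (\<phi> i \<sigma>)\<^sup>2))"
    using abs_phi_le by (intro sum_mono gibbs_avg_sq_le) auto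
  also have "\<dots> = gibbs_avg P h \<beta> (\<lambda>\<sigma>. \<Sum>i<N. (\<phi> i \<sigma>)\<^sup>2)"
    using integrable_sq by (simp add: gibbs_avg_sum)
  also have "\<dots> \<le> (\<integral>\<sigma>. B * gibbs_density \<beta> \<sigma> \<partial>P)"
  proof (unfold gibbs_avg_eq_integral_density, rule integral_mono)
    show "integrable P (\<lambda>\<sigma>. (\<Sum>i<N. (\<phi> i \<sigma>)\<^sup>2) * gibbs_density \<beta> \<sigma>)"
      using integrable_sq by (intro integrable_mult_gibbs_density) (simp add: sum_distrib_right)
    show "integrable P (\<lambda>\<sigma>. B * gibbs_density \<beta> \<sigma>)"
      using integrable_gibbs_density by simp
    show "(\<Sum>i<N. (\<phi> i \<sigma>)\<^sup>2) * gibbs_density \<beta> \<sigma> \<le> B * gibbs_density \<beta> \<sigma>" for \<sigma>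
      using sum_sq_phi_le gibbs_density_pos[of \<beta> \<sigma>] by (simp add: mult_right_mono)
  qed
  also have "\<dots> = B"
    by (simp add: integral_gibbs_density)
  finally show ?thesis .
qed

lemma abs_suminf_gibbs_avg_diff_le:
  assumes c: "\<And>N. (\<Sum>i<N. (c i)\<^sup>2) \<le> B"
  shows "\<bar>(\<Sum>i. c i * gibbs_avg P h \<beta>\<^sub>1 (\<phi> i)) - (\<Sum>i. c i * gibbs_avg P h \<beta>\<^sub>0 (\<phi> i))\<bar>
    \<le> B * gibbs_L1_dist \<beta>\<^sub>1 \<beta>\<^sub>0"
proof -
  have summable: "summable (\<lambda>i. c i * gibbs_avg P h \<beta> (\<phi> i))" for \<beta>
    using c sum_sq_gibbs_avg_phi_le by (rule summable_mult_of_bounded_sum_sq)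
  have "\<bar>\<Sum>i<N. c i * gibbs_avg P h \<beta>\<^sub>1 (\<phi> i) - c i * gibbs_avg P h \<beta>\<^sub>0 (\<phi> i)\<bar>
      \<le> B * gibbs_L1_dist \<beta>\<^sub>1 \<beta>\<^sub>0" for N
  proof -
    define f where "f \<sigma> = (\<Sum>i<N. c i * \<phi> i \<sigma>)" for \<sigma>
    have "0 \<le> B"
      using c[of 0] by simp
    have "\<bar>f \<sigma>\<bar> \<le> B" for \<sigma>
    proof (rule power2_le_imp_le)
      have "(f \<sigma>)\<^sup>2 \<le> (\<Sum>i<N. (c i)\<^sup>2) * (\<Sum>i<N. (\<phi> i \<sigma>)\<^sup>2)"
        unfolding f_def by (rule Cauchy_Schwarz_ineq_sum)
      also have "\<dots> \<le> B * B"
        using c sum_sq_phi_le \<open>0 \<le> B\<close> by (intro mult_mono sum_nonneg) auto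
      finally show "\<bar>f \<sigma>\<bar>\<^sup>2 \<le> B\<^sup>2"
        by (simp add: power2_eq_square)
    qed (use \<open>0 \<le> B\<close> in simp)
    moreover have "f \<in> borel_measurable P"
      unfolding f_def by measurable
    moreover have "(\<Sum>i<N. c i * gibbs_avg P h \<beta> (\<phi> i)) = gibbs_avg P h \<beta> f" for \<beta>
      unfolding f_def using integrable_phi_mult_exp
      by (simp add: gibbs_avg_sum mult.assoc gibbs_avg_mult_left)
    ultimately show ?thesis
      using abs_gibbs_avg_diff_le[of f B \<beta>\<^sub>1 \<beta>\<^sub>0] by (simp add: f_def sum_subtractf)
  qed
  then have "\<bar>\<Sum>i. c i * gibbs_avg P h \<beta>\<^sub>1 (\<phi> i) - c i * gibbs_avg P h \<beta>\<^sub>0 (\<phi> i)\<bar>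
      \<le> B * gibbs_L1_dist \<beta>\<^sub>1 \<beta>\<^sub>0"
    using summable by (intro abs_suminf_le_const summable_diff)
  then show ?thesis
    using suminf_diff[OF summable summable] by simp
qed

lemma abs_suminf_sq_gibbs_avg_diff_le:
  "\<bar>(\<Sum>i. (gibbs_avg P h \<beta>\<^sub>1 (\<phi> i))\<^sup>2) - (\<Sum>i. (gibbs_avg P h \<beta>\<^sub>0 (\<phi> i))\<^sup>2)\<bar>
    \<le> 2 * B * gibbs_L1_dist \<beta>\<^sub>1 \<beta>\<^sub>0"
proof -
  define a where "a \<beta> i = gibbs_avg P h \<beta> (\<phi> i)" for \<beta> i
  have diff_le: "\<bar>(\<Sum>i. a \<beta> i * a \<beta>\<^sub>1 i) - (\<Sum>i. a \<beta> i * a \<beta>\<^sub>0 i)\<bar> \<le> B * gibbs_L1_dist \<beta>\<^sub>1 \<beta>\<^sub>0" for \<beta>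
    unfolding a_def using sum_sq_gibbs_avg_phi_le by (rule abs_suminf_gibbs_avg_diff_le)
  have "(\<Sum>i. a \<beta>\<^sub>0 i * a \<beta>\<^sub>1 i) = (\<Sum>i. a \<beta>\<^sub>1 i * a \<beta>\<^sub>0 i)"
    by (simp add: mult.commute)
  then have "(\<Sum>i. (a \<beta>\<^sub>1 i)\<^sup>2) - (\<Sum>i. (a \<beta>\<^sub>0 i)\<^sup>2)
      = ((\<Sum>i. a \<beta>\<^sub>1 i * a \<beta>\<^sub>1 i) - (\<Sum>i. a \<beta>\<^sub>1 i * a \<beta>\<^sub>0 i))
        + ((\<Sum>i. a \<beta>\<^sub>0 i * a \<beta>\<^sub>1 i) - (\<Sum>i. a \<beta>\<^sub>0 i * a \<beta>\<^sub>0 i))"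
    by (simp add: power2_eq_square)
  then show ?thesis
    using diff_le[of \<beta>\<^sub>1] diff_le[of \<beta>\<^sub>0] unfolding a_def by linarith
qed

end

lemma gibbs_avg_stability:
  assumes "gibbs_features P h \<phi> (real n)" and "0 < n"
  shows "let F = free_energy n P h; avg = gibbs_avg P h;
      \<Delta> = sqrt (real n * (\<beta>\<^sub>1 - \<beta>\<^sub>0) * (deriv F \<beta>\<^sub>1 - deriv F \<beta>\<^sub>0))
    in (\<forall>f \<in> borel_measurable P. (\<forall>\<sigma>. \<bar>f \<sigma>\<bar> \<le> 1) \<longrightarrow> \<bar>avg \<beta>\<^sub>1 f - avg \<beta>\<^sub>0 f\<bar> \<le> \<Delta>)
      \<and> (\<forall>\<sigma>. \<bar>(\<Sum>i. \<phi> i \<sigma> * avg \<beta>\<^sub>1 (\<phi> i)) - (\<Sum>i. \<phi> i \<sigma> * avg \<beta>\<^sub>0 (\<phi> i))\<bar> / real n \<le> \<Delta>)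
      \<and> \<bar>(\<Sum>i. (avg \<beta>\<^sub>1 (\<phi> i))\<^sup>2) - (\<Sum>i. (avg \<beta>\<^sub>0 (\<phi> i))\<^sup>2)\<bar> / real n \<le> 2 * \<Delta>"
proof -
  interpret gibbs_features P h \<phi> "real n"
    by fact
  define \<Delta> where "\<Delta> = sqrt (real n * (\<beta>\<^sub>1 - \<beta>\<^sub>0)
    * (deriv (free_energy n P h) \<beta>\<^sub>1 - deriv (free_energy n P h) \<beta>\<^sub>0))"
  have dist_le: "gibbs_L1_dist \<beta>\<^sub>1 \<beta>\<^sub>0 \<le> \<Delta>"
    unfolding \<Delta>_def using assms(2) by (rule gibbs_L1_dist_le_free_energy)
  then have scaled_dist_le: "c * gibbs_L1_dist \<beta>\<^sub>1 \<beta>\<^sub>0 \<le> c * \<Delta>" if "0 \<le> c" for c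
    using that by (intro mult_left_mono) auto
  have "\<bar>gibbs_avg P h \<beta>\<^sub>1 f - gibbs_avg P h \<beta>\<^sub>0 f\<bar> \<le> \<Delta>"
    if "f \<in> borel_measurable P" "\<forall>\<sigma>. \<bar>f \<sigma>\<bar> \<le> 1" for f
    using abs_gibbs_avg_diff_le[of f 1 \<beta>\<^sub>1 \<beta>\<^sub>0] that dist_le by simp
  moreover have "\<bar>(\<Sum>i. \<phi> i \<sigma> * gibbs_avg P h \<beta>\<^sub>1 (\<phi> i))
      - (\<Sum>i. \<phi> i \<sigma> * gibbs_avg P h \<beta>\<^sub>0 (\<phi> i))\<bar> / real n \<le> \<Delta>" for \<sigma>
    using order_trans[OF abs_suminf_gibbs_avg_diff_le[OF sum_sq_phi_le] scaled_dist_le[of "real n"]] assms(2)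
    by (simp add: divide_le_eq mult.commute)
  moreover have "\<bar>(\<Sum>i. (gibbs_avg P h \<beta>\<^sub>1 (\<phi> i))\<^sup>2)
      - (\<Sum>i. (gibbs_avg P h \<beta>\<^sub>0 (\<phi> i))\<^sup>2)\<bar> / real n \<le> 2 * \<Delta>"
    using order_trans[OF abs_suminf_sq_gibbs_avg_diff_le scaled_dist_le[of "2 * real n"]] assms(2)
    by (simp add: divide_le_eq mult_ac)
  ultimately show ?thesis
    unfolding Let_def \<Delta>_def[symmetric] by blast
qed

section \<open>Gaussian series\<close>

lemma std_normal_density_mult_exp:
  "std_normal_density y * exp (c * y) = exp (c\<^sup>2 / 2) * normal_density c 1 y"
proof -
  have "- y\<^sup>2 / 2 + c * y = c\<^sup>2 / 2 + - (y - c)\<^sup>2 / 2"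
    by (simp add: power2_eq_square field_simps)
  then show ?thesis
    unfolding normal_density_def by (simp add: exp_add[symmetric])
qed

context prob_space
begin

lemma
  assumes "distributed M lborel X std_normal_density"
  shows integrable_exp_std_normal: "integrable M (\<lambda>\<omega>. exp (c * X \<omega>))"
    and integral_exp_std_normal: "(\<integral>\<omega>. exp (c * X \<omega>) \<partial>M) = exp (c\<^sup>2 / 2)"
proof -
  have "integrable lborel (\<lambda>y. std_normal_density y * exp (c * y))"
    unfolding std_normal_density_mult_exp by simp
  then show "integrable M (\<lambda>\<omega>. exp (c * X \<omega>))"
    using distributed_integrable[OF assms, of "\<lambda>y. exp (c * y)"] by simp
  have "(\<integral>\<omega>. exp (c * X \<omega>) \<partial>M) = (\<integral>y. std_normal_density y * exp (c * y) \<partial>lborel)"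
    using distributed_integral[OF assms, of "\<lambda>y. exp (c * y)"] by simp
  then show "(\<integral>\<omega>. exp (c * X \<omega>) \<partial>M) = exp (c\<^sup>2 / 2)"
    unfolding std_normal_density_mult_exp by simp
qed

lemma
  assumes indep: "indep_vars (\<lambda>_. borel) g UNIV"
    and std_normal: "\<And>i. distributed M lborel (g i) std_normal_density"
  shows integrable_mult_indep_std_normal: "integrable M (\<lambda>\<omega>. g i \<omega> * g j \<omega>)"
    and integral_mult_indep_std_normal: "(\<integral>\<omega>. g i \<omega> * g j \<omega> \<partial>M) = (if i = j then 1 else 0)"
proof -
  have integrable_g: "integrable M (g l)" for l
    using distributed_integrable[OF std_normal[of l], of "\<lambda>y. y"] integrable_std_normal_moment[of 1]
    by simp
  have "integrable M (\<lambda>\<omega>. g i \<omega> * g j \<omega>) \<and> (\<integral>\<omega>. g i \<omega> * g j \<omega> \<partial>M) = (if i = j then 1 else 0)"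
  proof (cases "i = j")
    case True
    have "integrable M (\<lambda>\<omega>. (g j \<omega>)\<^sup>2)"
      using distributed_integrable[OF std_normal[of j], of "\<lambda>y. y\<^sup>2"] integrable_std_normal_moment[of 2]
      by simp
    moreover have "(\<integral>\<omega>. (g j \<omega>)\<^sup>2 \<partial>M) = 1"
      using standard_normal_distributed_variance[OF std_normal]
        standard_normal_distributed_expectation[OF std_normal] by simp
    ultimately show ?thesis
      using True by (simp add: power2_eq_square)
  next
    case False
    have ind: "indep_vars (\<lambda>_. borel) g {i, j}"
      by (rule indep_vars_subset[OF indep]) auto
    have "integrable M (\<lambda>\<omega>. \<Prod>l\<in>{i, j}. g l \<omega>)"
      using integrable_g by (intro indep_vars_integrable[OF _ ind]) auto
    moreover have "(\<integral>\<omega>. (\<Prod>l\<in>{i, j}. g l \<omega>) \<partial>M) = (\<Prod>l\<in>{i, j}. \<integral>\<omega>. g l \<omega> \<partial>M)"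
      using integrable_g by (intro indep_vars_lebesgue_integral[OF _ ind]) auto
    ultimately show ?thesis
      using False standard_normal_distributed_expectation[OF std_normal] by simp
  qed
  then show "integrable M (\<lambda>\<omega>. g i \<omega> * g j \<omega>)"
    and "(\<integral>\<omega>. g i \<omega> * g j \<omega> \<partial>M) = (if i = j then 1 else 0)"
    by auto
qed

end

(* Assumption (A4) at a fixed configuration sigma, with x i = phi_i(sigma) and h = H(sigma). *)
locale gaussian_series = prob_space M for M :: "'w measure" +
  fixes g :: "nat \<Rightarrow> 'w \<Rightarrow> real" and x :: "nat \<Rightarrow> real" and h :: "'w \<Rightarrow> real"
  assumes indep: "indep_vars (\<lambda>_. borel) g UNIV"
    and std_normal: "\<And>i. distributed M lborel (g i) std_normal_density"
    and h_measurable[measurable]: "h \<in> borel_measurable M"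
    and integrable_sq_remainder: "\<And>N. integrable M (\<lambda>\<omega>. (h \<omega> - (\<Sum>i<N. g i \<omega> * x i))\<^sup>2)"
    and sq_remainder_tendsto: "(\<lambda>N. \<integral>\<omega>. (h \<omega> - (\<Sum>i<N. g i \<omega> * x i))\<^sup>2 \<partial>M) \<longlonglongrightarrow> 0"
begin

definition partial_sum :: "nat \<Rightarrow> 'w \<Rightarrow> real" where
  "partial_sum N \<omega> = (\<Sum>i<N. g i \<omega> * x i)"

lemma g_measurable[measurable]: "g i \<in> borel_measurable M"
  using distributed_measurable[OF std_normal] by simp

lemma partial_sum_measurable[measurable]: "partial_sum N \<in> borel_measurable M"
  unfolding partial_sum_def by measurable

lemma integrable_sq_h: "integrable M (\<lambda>\<omega>. (h \<omega>)\<^sup>2)"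
  using integrable_sq_remainder[of 0] by simp

lemma
  shows integrable_partial_sum_sq: "integrable M (\<lambda>\<omega>. (partial_sum N \<omega>)\<^sup>2)"
    and integral_partial_sum_sq: "(\<integral>\<omega>. (partial_sum N \<omega>)\<^sup>2 \<partial>M) = (\<Sum>i<N. (x i)\<^sup>2)"
proof -
  have expand: "(partial_sum N \<omega>)\<^sup>2 = (\<Sum>i<N. \<Sum>j<N. (x i * x j) * (g i \<omega> * g j \<omega>))" for \<omega>
    by (simp add: partial_sum_def power2_eq_square sum_product algebra_simps)
  show "integrable M (\<lambda>\<omega>. (partial_sum N \<omega>)\<^sup>2)"
    unfolding expand using integrable_mult_indep_std_normal[OF indep std_normal] by simp
  have "(\<integral>\<omega>. (partial_sum N \<omega>)\<^sup>2 \<partial>M) = (\<Sum>i<N. \<Sum>j<N. (x i * x j) * (if i = j then 1 else 0))"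
    unfolding expand
    using integrable_mult_indep_std_normal[OF indep std_normal]
      integral_mult_indep_std_normal[OF indep std_normal]
    by simp
  also have "\<dots> = (\<Sum>i<N. (x i)\<^sup>2)"
    by (simp add: power2_eq_square if_distrib[of "(*) _"] sum.delta cong: if_cong)
  finally show "(\<integral>\<omega>. (partial_sum N \<omega>)\<^sup>2 \<partial>M) = (\<Sum>i<N. (x i)\<^sup>2)" .
qed

lemma
  shows integrable_exp_partial_sum: "integrable M (\<lambda>\<omega>. exp (k * partial_sum N \<omega>))"
    and integral_exp_partial_sum:
      "(\<integral>\<omega>. exp (k * partial_sum N \<omega>) \<partial>M) = exp (k\<^sup>2 * (\<Sum>i<N. (x i)\<^sup>2) / 2)"
proof -
  have prod: "exp (k * partial_sum N \<omega>) = (\<Prod>i<N. exp ((k * x i) * g i \<omega>))" for \<omega>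
    by (simp add: partial_sum_def sum_distrib_left exp_sum algebra_simps)
  have ind: "indep_vars (\<lambda>_. borel) (\<lambda>i \<omega>. exp ((k * x i) * g i \<omega>)) {..<N}"
    using indep_vars_compose2[where Y = "\<lambda>i y. exp ((k * x i) * y)" and X = g,
        OF indep_vars_subset[OF indep]] by simp
  have integrable: "\<And>i. i \<in> {..<N} \<Longrightarrow> integrable M (\<lambda>\<omega>. exp ((k * x i) * g i \<omega>))"
    using integrable_exp_std_normal[OF std_normal] by blast
  show "integrable M (\<lambda>\<omega>. exp (k * partial_sum N \<omega>))"
    unfolding prod by (rule indep_vars_integrable[OF _ ind integrable]) simp
  have "(\<integral>\<omega>. exp (k * partial_sum N \<omega>) \<partial>M) = (\<Prod>i<N. \<integral>\<omega>. exp ((k * x i) * g i \<omega>) \<partial>M)"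
    unfolding prod by (rule indep_vars_lebesgue_integral[OF _ ind integrable]) simp
  also have "\<dots> = exp (\<Sum>i<N. (k * x i)\<^sup>2 / 2)"
    by (simp add: integral_exp_std_normal[OF std_normal] exp_sum)
  also have "(\<Sum>i<N. (k * x i)\<^sup>2 / 2) = k\<^sup>2 * (\<Sum>i<N. (x i)\<^sup>2) / 2"
    by (simp add: power_mult_distrib sum_distrib_left sum_divide_distrib)
  finally show "(\<integral>\<omega>. exp (k * partial_sum N \<omega>) \<partial>M) = exp (k\<^sup>2 * (\<Sum>i<N. (x i)\<^sup>2) / 2)" .
qed

lemma sum_sq_coeff_le: "(\<Sum>i<N. (x i)\<^sup>2) \<le> (\<integral>\<omega>. (h \<omega>)\<^sup>2 \<partial>M)"
proof -
  let ?E = "\<integral>\<omega>. (h \<omega>)\<^sup>2 \<partial>M"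
  let ?e = "\<lambda>K. \<integral>\<omega>. (h \<omega> - partial_sum K \<omega>)\<^sup>2 \<partial>M"
  have integrable_remainder: "integrable M (\<lambda>\<omega>. (h \<omega> - partial_sum K \<omega>)\<^sup>2)" for K
    using integrable_sq_remainder by (simp add: partial_sum_def)
  have young_bound: "(\<Sum>i<N. (x i)\<^sup>2) \<le> (1 + t) * ?E + (1 + 1 / t) * ?e K"
    if "0 < t" "N \<le> K" for t K
  proof -
    have "(\<Sum>i<N. (x i)\<^sup>2) \<le> (\<Sum>i<K. (x i)\<^sup>2)"
      using \<open>N \<le> K\<close> by (intro sum_mono2) auto
    also have "\<dots> = (\<integral>\<omega>. (partial_sum K \<omega>)\<^sup>2 \<partial>M)"
      by (rule integral_partial_sum_sq[symmetric])
    also have "\<dots> \<le> (\<integral>\<omega>. (1 + t) * (h \<omega>)\<^sup>2 + (1 + 1 / t) * (h \<omega> - partial_sum K \<omega>)\<^sup>2 \<partial>M)"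
      using integrable_partial_sum_sq integrable_sq_h integrable_remainder sq_le_Young[OF \<open>0 < t\<close>]
      by (intro integral_mono) auto
    also have "\<dots> = (1 + t) * ?E + (1 + 1 / t) * ?e K"
      using integrable_sq_h integrable_remainder by simp
    finally show ?thesis .
  qed
  have "?e \<longlonglongrightarrow> 0"
    using sq_remainder_tendsto by (simp add: partial_sum_def)
  have "(\<Sum>i<N. (x i)\<^sup>2) \<le> (1 + 1 / real m) * ?E" if "1 \<le> m" for m
  proof (rule LIMSEQ_le_const)
    show "(\<lambda>K. (1 + 1 / real m) * ?E + (1 + real m) * ?e K) \<longlonglongrightarrow> (1 + 1 / real m) * ?E"
      using \<open>?e \<longlonglongrightarrow> 0\<close> by (auto intro!: tendsto_eq_intros)
    show "\<exists>K\<^sub>0. \<forall>K\<ge>K\<^sub>0. (\<Sum>i<N. (x i)\<^sup>2) \<le> (1 + 1 / real m) * ?E + (1 + real m) * ?e K"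
      using young_bound[of "1 / real m"] that by auto
  qed
  moreover have "(\<lambda>m. (1 + 1 / real m) * ?E) \<longlonglongrightarrow> (1 + 0) * ?E"
    by (intro tendsto_intros lim_const_over_n)
  ultimately show ?thesis
    using LIMSEQ_le_const[of "\<lambda>m. (1 + 1 / real m) * ?E" ?E] by auto
qed

lemma AE_subseq_partial_sum_tendsto:
  obtains r :: "nat \<Rightarrow> nat" where "strict_mono r" "AE \<omega> in M. (\<lambda>N. partial_sum (r N) \<omega>) \<longlonglongrightarrow> h \<omega>"
proof -
  have "\<exists>r. strict_mono r \<and> (AE \<omega> in M. (\<lambda>N. (h \<omega> - partial_sum (r N) \<omega>)\<^sup>2) \<longlonglongrightarrow> 0)"
    using integrable_sq_remainder sq_remainder_tendsto
    by (intro tendsto_L1_AE_subseq) (simp_all add: partial_sum_def)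
  then obtain r where "strict_mono r" and "AE \<omega> in M. (\<lambda>N. h \<omega> - partial_sum (r N) \<omega>) \<longlonglongrightarrow> 0"
    by auto
  have "(\<lambda>N. partial_sum (r N) \<omega>) \<longlonglongrightarrow> h \<omega>"
    if "(\<lambda>N. h \<omega> - partial_sum (r N) \<omega>) \<longlonglongrightarrow> 0" for \<omega>
    using tendsto_diff[OF tendsto_const[of "h \<omega>"] that] by simp
  with \<open>AE \<omega> in M. (\<lambda>N. h \<omega> - partial_sum (r N) \<omega>) \<longlonglongrightarrow> 0\<close>
  have "AE \<omega> in M. (\<lambda>N. partial_sum (r N) \<omega>) \<longlonglongrightarrow> h \<omega>"
    by (auto elim: eventually_mono)
  with \<open>strict_mono r\<close> show ?thesis
    by (rule that)
qed

lemma nn_integral_exp_le: "(\<integral>\<^sup>+\<omega>. exp (k * h \<omega>) \<partial>M) \<le> exp (k\<^sup>2 * (\<integral>\<omega>. (h \<omega>)\<^sup>2 \<partial>M) / 2)"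
proof -
  obtain r :: "nat \<Rightarrow> nat" where "AE \<omega> in M. (\<lambda>N. partial_sum (r N) \<omega>) \<longlonglongrightarrow> h \<omega>"
    using AE_subseq_partial_sum_tendsto by blast
  then have "AE \<omega> in M. liminf (\<lambda>N. ennreal (exp (k * partial_sum (r N) \<omega>))) = exp (k * h \<omega>)"
    by (auto elim!: AE_mp intro!: lim_imp_Liminf tendsto_intros)
  then have "(\<integral>\<^sup>+\<omega>. exp (k * h \<omega>) \<partial>M)
      = (\<integral>\<^sup>+\<omega>. liminf (\<lambda>N. ennreal (exp (k * partial_sum (r N) \<omega>))) \<partial>M)"
    by (intro nn_integral_cong_AE) auto
  also have "\<dots> \<le> liminf (\<lambda>N. \<integral>\<^sup>+\<omega>. exp (k * partial_sum (r N) \<omega>) \<partial>M)"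
    by (intro nn_integral_liminf) measurable
  also have "\<dots> \<le> exp (k\<^sup>2 * (\<integral>\<omega>. (h \<omega>)\<^sup>2 \<partial>M) / 2)"
  proof (intro Liminf_le always_eventually allI)
    fix N
    have "(\<integral>\<^sup>+\<omega>. exp (k * partial_sum (r N) \<omega>) \<partial>M) = exp (k\<^sup>2 * (\<Sum>i<r N. (x i)\<^sup>2) / 2)"
      using integrable_exp_partial_sum integral_exp_partial_sum
      by (simp add: nn_integral_eq_integral)
    also have "\<dots> \<le> exp (k\<^sup>2 * (\<integral>\<omega>. (h \<omega>)\<^sup>2 \<partial>M) / 2)"
      using sum_sq_coeff_le by (intro ennreal_leI) (simp add: mult_left_mono)
    finally show "(\<integral>\<^sup>+\<omega>. exp (k * partial_sum (r N) \<omega>) \<partial>M) \<le> exp (k\<^sup>2 * (\<integral>\<omega>. (h \<omega>)\<^sup>2 \<partial>M) / 2)" .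
  qed simp
  finally show ?thesis .
qed

end

theorem mainTheorem11:
  fixes M :: "'w measure"
    and P :: "'s::polish_space measure"
    and n :: nat
    and H :: "'w \<Rightarrow> 's \<Rightarrow> real"
    and \<phi> :: "nat \<Rightarrow> 's \<Rightarrow> real"
    and g :: "nat \<Rightarrow> 'w \<Rightarrow> real"
    and \<beta>\<^sub>0 \<beta>\<^sub>1 :: real
  assumes M_prob: "prob_space M"
    and P_prob: "prob_space P"
    and P_borel: "sets P = sets borel"
    and n_pos: "n > 0"
    and H_meas: "(\<lambda>(\<omega>, \<sigma>). H \<omega> \<sigma>) \<in> borel_measurable (M \<Otimes>\<^sub>M P)"
    and H_centered: "\<And>\<sigma>. prob_space.expectation M (\<lambda>\<omega>. H \<omega> \<sigma>) = 0"
    \<comment> \<open>(A2)\<close>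
    and A2: "\<And>\<sigma>. prob_space.variance M (\<lambda>\<omega>. H \<omega> \<sigma>) = real n"
    \<comment> \<open>(A4)\<close>
    and phi_meas: "\<And>i. \<phi> i \<in> borel_measurable P"
    and g_indep: "prob_space.indep_vars M (\<lambda>_. borel) g UNIV"
    and g_normal: "\<And>i. distributed M lborel (g i) std_normal_density"
    and A4_L2_int: "\<And>\<sigma> N. integrable M (\<lambda>\<omega>. (H \<omega> \<sigma> - (\<Sum>i<N. g i \<omega> * \<phi> i \<sigma>))\<^sup>2)"
    and A4_L2_lim: "\<And>\<sigma>. (\<lambda>N. \<integral>\<omega>. (H \<omega> \<sigma> - (\<Sum>i<N. g i \<omega> * \<phi> i \<sigma>))\<^sup>2 \<partial>M)
                          \<longlonglongrightarrow> 0"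
    and beta0: "0 \<le> \<beta>\<^sub>0"
    and beta01: "\<beta>\<^sub>0 \<le> \<beta>\<^sub>1"
  shows "AE \<omega> in M.
    (let F = free_energy n P (H \<omega>);
         avg = gibbs_avg P (H \<omega>);
         \<Delta> = sqrt (real n * (\<beta>\<^sub>1 - \<beta>\<^sub>0) * (deriv F \<beta>\<^sub>1 - deriv F \<beta>\<^sub>0))
     in (\<forall>f \<in> borel_measurable P. (\<forall>\<sigma>. \<bar>f \<sigma>\<bar> \<le> 1) \<longrightarrow>
            \<bar>avg \<beta>\<^sub>1 f - avg \<beta>\<^sub>0 f\<bar> \<le> \<Delta>)
      \<and> (\<forall>\<sigma>. \<bar>(\<Sum>i. \<phi> i \<sigma> * avg \<beta>\<^sub>1 (\<phi> i)) - (\<Sum>i. \<phi> i \<sigma> * avg \<beta>\<^sub>0 (\<phi> i))\<bar> / real n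
              \<le> \<Delta>)
      \<and> \<bar>(\<Sum>i. (avg \<beta>\<^sub>1 (\<phi> i))\<^sup>2) - (\<Sum>i. (avg \<beta>\<^sub>0 (\<phi> i))\<^sup>2)\<bar> / real n \<le> 2 * \<Delta>)"
proof -
  interpret MP: pair_sigma_finite M P
    using M_prob P_prob by (simp add: pair_sigma_finite_def prob_space_imp_sigma_finite)
  have "(\<lambda>\<omega>. H \<omega> \<sigma>) \<in> borel_measurable M" for \<sigma>
    using measurable_comp[OF measurable_Pair2' H_meas] sets_eq_imp_space_eq[OF P_borel]
    by (simp add: comp_def)
  then have gaussian: "gaussian_series M g (\<lambda>i. \<phi> i \<sigma>) (\<lambda>\<omega>. H \<omega> \<sigma>)" for \<sigma>
    using M_prob g_indep g_normal A4_L2_int A4_L2_lim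
    by (simp add: gaussian_series_def gaussian_series_axioms_def)
  have second_moment: "(\<integral>\<omega>. (H \<omega> \<sigma>)\<^sup>2 \<partial>M) = real n" for \<sigma>
    using A2[of \<sigma>] H_centered[of \<sigma>] by simp
  have AE_integrable: "AE \<omega> in M. \<forall>\<beta>. integrable P (\<lambda>\<sigma>. exp (\<beta> * H \<omega> \<sigma>))"
    using gaussian_series.nn_integral_exp_le[OF gaussian] P_prob
    by (intro MP.AE_integrable_exp_of_nn_integral_bound[OF H_meas])
      (auto simp: second_moment prob_space.emeasure_space_1)
  have features: "gibbs_features P (H \<omega>) \<phi> (real n)"
    if "\<omega> \<in> space M" and "\<forall>\<beta>. integrable P (\<lambda>\<sigma>. exp (\<beta> * H \<omega> \<sigma>))" for \<omega>
  proof -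
    have "H \<omega> \<in> borel_measurable P"
      using measurable_comp[OF measurable_Pair1'[OF \<open>\<omega> \<in> space M\<close>] H_meas] by (simp add: comp_def)
    moreover have "(\<Sum>i<N. (\<phi> i \<sigma>)\<^sup>2) \<le> real n" for \<sigma> N
      using gaussian_series.sum_sq_coeff_le[OF gaussian] second_moment by simp
    ultimately show ?thesis
      using P_prob phi_meas that(2)
      by (intro gibbs_features.intro gibbs_family.intro gibbs_family_axioms.intro
          gibbs_features_axioms.intro) auto
  qed
  show ?thesis
    by (rule AE_mp[OF AE_integrable]) (auto intro!: AE_I2 gibbs_avg_stability features n_pos)
qed

end
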